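(* Let $\xi_1,\xi_2,\dots$ be i.i.d. standard Gaussian random variables. There are constants $\tilde c_3,\tilde c_4>0$ such that for all $L>0$ and all $N\in\mathbb{N}$ with $L/2\le N\le2L$, $$\tilde c_3L\le-\log\mathbb{E}\,e^{-L\max_{i=1,\dots,N}|\xi_i|}\le\tilde c_4L.$$ *)

theory Defs
  imports "HOL-Probability.Probability"
begin

end

theory Submission
  imports Defs
begin

text \<open>
  Write \<open>E = \<integral> exp (-L max\<^sub>i |\<xi>\<^sub>i|)\<close>. For the upper bound, \<open>L max\<^sub>i |\<xi>\<^sub>i| \<ge> (L/N) \<Sum>\<^sub>i |\<xi>\<^sub>i|\<close>,
  so by independence \<open>E \<le> (\<integral> exp (-(L/N) |\<xi>|))\<^sup>N\<close>; since \<open>L/N \<ge> 1/4\<close>, a quartic polynomial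
  bound on \<open>exp (-a|x|)\<close> and the Gaussian moments 1 and 3 give \<open>\<integral> exp (-(L/N) |\<xi>|) \<le> 31/32\<close>.
  For the lower bound, \<open>exp (-L max\<^sub>i |\<xi>\<^sub>i|) \<ge> exp (-2L) \<Prod>\<^sub>i max 0 (1 - \<xi>\<^sub>i\<^sup>2/4)\<close>, since the
  product vanishes unless all \<open>|\<xi>\<^sub>i| \<le> 2\<close>; each factor has expectation at least \<open>3/4\<close>.
  As \<open>N\<close> is comparable to \<open>L\<close>, both bounds are exponential in \<open>L\<close>.
\<close>

lemma exp_neg_le_quadratic:
  fixes y :: real
  assumes "y \<ge> 0"
  shows "exp (- y) \<le> 1 - y + y\<^sup>2 / 2"
proof -
  have pos: "0 < 1 + y + y\<^sup>2 / 2" using assms by (simp add: add_pos_nonneg)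
  have "exp (- y) = 1 / exp y" by (simp add: exp_minus inverse_eq_divide)
  also have "\<dots> \<le> 1 / (1 + y + y\<^sup>2 / 2)"
    using exp_lower_Taylor_quadratic[OF assms] pos by (intro divide_left_mono) auto
  also have "\<dots> \<le> 1 - y + y\<^sup>2 / 2"
  proof -
    have "(1 + y + y\<^sup>2 / 2) * (1 - y + y\<^sup>2 / 2) = 1 + y ^ 4 / 4"
      by (simp add: algebra_simps power2_eq_square power4_eq_xxxx)
    then show ?thesis using pos by (simp add: divide_le_eq mult.commute)
  qed
  finally show ?thesis .
qed

lemma quartic_le_self:
  fixes t :: real
  assumes "t \<ge> 0"
  shows "t\<^sup>2 - t ^ 4 / 4 \<le> t"
proof -
  have "0 \<le> 1 - t + t ^ 3 / 4"
  proof (cases "t \<le> 1")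
    case True
    then show ?thesis using assms by simp
  next
    case False
    then have "t\<^sup>2 \<le> t ^ 3" by (simp add: power_increasing)
    moreover have "0 \<le> (1 - t / 2)\<^sup>2" by simp
    ultimately show ?thesis by (simp add: power2_eq_square algebra_simps)
  qed
  then have "0 \<le> t * (1 - t + t ^ 3 / 4)" using assms by simp
  then show ?thesis by (simp add: algebra_simps power2_eq_square power3_eq_cube power4_eq_xxxx)
qed

lemma exp_neg_abs_le_quartic:
  fixes a x :: real
  assumes "a \<ge> 1 / 4"
  shows "exp (- a * \<bar>x\<bar>) \<le> 1 - 7 / 32 * x\<^sup>2 + x ^ 4 / 16"
proof -
  have "\<bar>x\<bar> / 4 \<le> a * \<bar>x\<bar>" using mult_right_mono[OF assms abs_ge_zero[of x]] by simp
  then have "exp (- a * \<bar>x\<bar>) \<le> exp (- (\<bar>x\<bar> / 4))" by simp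
  also have "\<dots> \<le> 1 - \<bar>x\<bar> / 4 + (\<bar>x\<bar> / 4)\<^sup>2 / 2" by (rule exp_neg_le_quadratic) simp
  also have "\<dots> \<le> 1 - (\<bar>x\<bar>\<^sup>2 - \<bar>x\<bar> ^ 4 / 4) / 4 + (\<bar>x\<bar> / 4)\<^sup>2 / 2"
    using quartic_le_self[of "\<bar>x\<bar>"] by simp
  also have "\<dots> = 1 - 7 / 32 * x\<^sup>2 + x ^ 4 / 16"
    by (simp add: power_divide power2_abs power_even_abs_numeral) (simp add: field_simps)
  finally show ?thesis .
qed

lemma std_normal_even_moment:
  assumes "distributed M lborel X std_normal_density"
  shows "integrable M (\<lambda>\<omega>. X \<omega> ^ (2 * k))"
    and "(\<integral>\<omega>. X \<omega> ^ (2 * k) \<partial>M) = fact (2 * k) / (2 ^ k * fact k)"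
  using distributed_integrable[OF assms, of "\<lambda>x. x ^ (2 * k)"]
    distributed_integral[OF assms, of "\<lambda>x. x ^ (2 * k)"]
    integrable_std_normal_moment[of "2 * k"] integral_std_normal_moment_even[of k]
  by (simp_all add: normal_density_nonneg)

lemma std_normal_moments_2_4:
  assumes "distributed M lborel X std_normal_density"
  shows "integrable M (\<lambda>\<omega>. X \<omega> ^ 2)" "(\<integral>\<omega>. X \<omega> ^ 2 \<partial>M) = 1"
    and "integrable M (\<lambda>\<omega>. X \<omega> ^ 4)" "(\<integral>\<omega>. X \<omega> ^ 4 \<partial>M) = 3"
  using std_normal_even_moment[OF assms, of 1] std_normal_even_moment[OF assms, of 2]
  by (simp_all add: fact_numeral)

context prob_space
begin

lemma expectation_exp_neg_abs_std_normal_le: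
  assumes X: "distributed M lborel X std_normal_density" and a: "a \<ge> 1 / 4"
  shows "(\<integral>\<omega>. exp (- a * \<bar>X \<omega>\<bar>) \<partial>M) \<le> 31 / 32"
proof -
  have [measurable]: "X \<in> borel_measurable M" using distributed_measurable[OF X] by simp
  have "integrable M (\<lambda>\<omega>. exp (- a * \<bar>X \<omega>\<bar>))"
    by (rule integrable_const_bound[where B = 1]) (use a in auto)
  then have "(\<integral>\<omega>. exp (- a * \<bar>X \<omega>\<bar>) \<partial>M) \<le> (\<integral>\<omega>. 1 - 7 / 32 * X \<omega> ^ 2 + X \<omega> ^ 4 / 16 \<partial>M)"
    using std_normal_moments_2_4[OF X] exp_neg_abs_le_quartic[OF a] by (intro integral_mono) auto
  also have "\<dots> = 31 / 32"
    using std_normal_moments_2_4[OF X] by (simp add: prob_space)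
  finally show ?thesis .
qed

lemma expectation_truncated_square_std_normal_ge:
  assumes X: "distributed M lborel X std_normal_density"
  shows "3 / 4 \<le> (\<integral>\<omega>. max 0 (1 - X \<omega> ^ 2 / 4) \<partial>M)"
proof -
  have [measurable]: "X \<in> borel_measurable M" using distributed_measurable[OF X] by simp
  have "integrable M (\<lambda>\<omega>. max 0 (1 - X \<omega> ^ 2 / 4))"
    by (rule integrable_const_bound[where B = 1]) auto
  then have "(\<integral>\<omega>. 1 - X \<omega> ^ 2 / 4 \<partial>M) \<le> (\<integral>\<omega>. max 0 (1 - X \<omega> ^ 2 / 4) \<partial>M)"
    using std_normal_moments_2_4[OF X] by (intro integral_mono) auto
  then show ?thesis using std_normal_moments_2_4[OF X] by (simp add: prob_space)
qed

lemma indep_vars_expectation_prod_comp: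
  fixes X :: "'i \<Rightarrow> 'a \<Rightarrow> real" and g :: "real \<Rightarrow> real"
  assumes I: "finite I" and indep: "indep_vars (\<lambda>_. borel) X I"
    and g: "g \<in> borel_measurable borel" and bounded: "\<And>x. \<bar>g x\<bar> \<le> B"
  shows "integrable M (\<lambda>\<omega>. \<Prod>i\<in>I. g (X i \<omega>))"
    and "(\<integral>\<omega>. (\<Prod>i\<in>I. g (X i \<omega>)) \<partial>M) = (\<Prod>i\<in>I. \<integral>\<omega>. g (X i \<omega>) \<partial>M)"
proof -
  have indep_g: "indep_vars (\<lambda>_. borel) (\<lambda>i \<omega>. g (X i \<omega>)) I"
    using indep g by (intro indep_vars_compose2[OF indep]) auto
  have "integrable M (\<lambda>\<omega>. g (X i \<omega>))" if "i \<in> I" for i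
  proof (rule integrable_const_bound[where B = B])
    show "(\<lambda>\<omega>. g (X i \<omega>)) \<in> borel_measurable M"
      using indep that g unfolding indep_vars_def by (auto intro: measurable_compose)
  qed (use bounded in auto)
  then show "integrable M (\<lambda>\<omega>. \<Prod>i\<in>I. g (X i \<omega>))"
    and "(\<integral>\<omega>. (\<Prod>i\<in>I. g (X i \<omega>)) \<partial>M) = (\<Prod>i\<in>I. \<integral>\<omega>. g (X i \<omega>) \<partial>M)"
    using indep_vars_integrable[OF I indep_g] indep_vars_lebesgue_integral[OF I indep_g] by auto
qed

lemma integrable_exp_neg_Max_abs:
  fixes X :: "'i \<Rightarrow> 'a \<Rightarrow> real"
  assumes I: "finite I" "I \<noteq> {}" and X: "\<And>i. i \<in> I \<Longrightarrow> X i \<in> borel_measurable M"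
    and L: "L \<ge> 0"
  shows "integrable M (\<lambda>\<omega>. exp (- L * (MAX i\<in>I. \<bar>X i \<omega>\<bar>)))"
proof (rule integrable_const_bound[where B = 1])
  have "0 \<le> (MAX i\<in>I. \<bar>X i \<omega>\<bar>)" for \<omega> using I by (auto simp: Max_ge_iff)
  then show "AE \<omega> in M. norm (exp (- L * (MAX i\<in>I. \<bar>X i \<omega>\<bar>))) \<le> 1" using L by simp
qed (use I X in auto)

lemma expectation_exp_neg_Max_abs_le:
  fixes X :: "'i \<Rightarrow> 'a \<Rightarrow> real"
  assumes I: "finite I" "I \<noteq> {}" and indep: "indep_vars (\<lambda>_. borel) X I"
    and normal: "\<And>i. i \<in> I \<Longrightarrow> distributed M lborel (X i) std_normal_density"
    and L: "real (card I) \<le> 4 * L"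
  shows "(\<integral>\<omega>. exp (- L * (MAX i\<in>I. \<bar>X i \<omega>\<bar>)) \<partial>M) \<le> (31 / 32) ^ card I"
proof -
  define a where "a = L / real (card I)"
  have card_pos: "real (card I) > 0" using I by (simp add: card_gt_0_iff)
  have a: "a \<ge> 1 / 4" unfolding a_def using L card_pos by (simp add: field_simps)
  have [measurable]: "X i \<in> borel_measurable M" if "i \<in> I" for i
    using distributed_measurable[OF normal[OF that]] by simp
  have pointwise: "exp (- L * (MAX i\<in>I. \<bar>X i \<omega>\<bar>)) \<le> (\<Prod>i\<in>I. exp (- a * \<bar>X i \<omega>\<bar>))" for \<omega>
  proof -
    have "(\<Sum>i\<in>I. \<bar>X i \<omega>\<bar>) \<le> real (card I) * (MAX i\<in>I. \<bar>X i \<omega>\<bar>)"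
      using I by (intro sum_bounded_above) auto
    then have "a * (\<Sum>i\<in>I. \<bar>X i \<omega>\<bar>) \<le> L * (MAX i\<in>I. \<bar>X i \<omega>\<bar>)"
      using a card_pos mult_left_mono[of _ _ a] unfolding a_def by fastforce
    then have "exp (- L * (MAX i\<in>I. \<bar>X i \<omega>\<bar>)) \<le> exp (\<Sum>i\<in>I. - a * \<bar>X i \<omega>\<bar>)"
      by (simp add: sum_negf sum_distrib_left)
    then show ?thesis using I(1) by (simp only: exp_sum)
  qed
  note prod = indep_vars_expectation_prod_comp[OF I(1) indep, of "\<lambda>x. exp (- a * \<bar>x\<bar>)" 1]
  have "(\<integral>\<omega>. exp (- L * (MAX i\<in>I. \<bar>X i \<omega>\<bar>)) \<partial>M) \<le> (\<integral>\<omega>. (\<Prod>i\<in>I. exp (- a * \<bar>X i \<omega>\<bar>)) \<partial>M)"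
  proof (rule integral_mono[OF _ _ pointwise])
    have "0 \<le> L" using a card_pos unfolding a_def by (simp add: field_simps)
    then show "integrable M (\<lambda>\<omega>. exp (- L * (MAX i\<in>I. \<bar>X i \<omega>\<bar>)))"
      using I by (intro integrable_exp_neg_Max_abs) auto
  qed (use prod a in auto)
  also have "\<dots> = (\<Prod>i\<in>I. \<integral>\<omega>. exp (- a * \<bar>X i \<omega>\<bar>) \<partial>M)"
    using prod a by auto
  also have "\<dots> \<le> (\<Prod>i\<in>I. 31 / 32)"
    using expectation_exp_neg_abs_std_normal_le[OF normal a] by (intro prod_mono) auto
  finally show ?thesis by simp
qed

lemma expectation_exp_neg_Max_abs_ge:
  fixes X :: "'i \<Rightarrow> 'a \<Rightarrow> real"
  assumes I: "finite I" "I \<noteq> {}" and indep: "indep_vars (\<lambda>_. borel) X I"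
    and normal: "\<And>i. i \<in> I \<Longrightarrow> distributed M lborel (X i) std_normal_density"
    and L: "L \<ge> 0"
  shows "exp (- 2 * L) * (3 / 4) ^ card I \<le> (\<integral>\<omega>. exp (- L * (MAX i\<in>I. \<bar>X i \<omega>\<bar>)) \<partial>M)"
proof -
  let ?h = "\<lambda>x. max 0 (1 - x ^ 2 / 4) :: real"
  have [measurable]: "X i \<in> borel_measurable M" if "i \<in> I" for i
    using distributed_measurable[OF normal[OF that]] by simp
  have pointwise: "exp (- 2 * L) * (\<Prod>i\<in>I. ?h (X i \<omega>)) \<le> exp (- L * (MAX i\<in>I. \<bar>X i \<omega>\<bar>))" for \<omega>
  proof (cases "\<forall>i\<in>I. \<bar>X i \<omega>\<bar> \<le> 2")
    case True
    then have "(MAX i\<in>I. \<bar>X i \<omega>\<bar>) \<le> 2" using I by simp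
    then have "L * (MAX i\<in>I. \<bar>X i \<omega>\<bar>) \<le> L * 2" using L by (rule mult_left_mono)
    then have "exp (- 2 * L) \<le> exp (- L * (MAX i\<in>I. \<bar>X i \<omega>\<bar>))" by simp
    moreover have "(\<Prod>i\<in>I. ?h (X i \<omega>)) \<le> 1" by (intro prod_le_1) auto
    ultimately show ?thesis by (meson exp_ge_zero mult_left_le order_trans)
  next
    case False
    then obtain j where "j \<in> I" "2 < \<bar>X j \<omega>\<bar>" by auto
    then have "?h (X j \<omega>) = 0" using power_strict_mono[of 2 "\<bar>X j \<omega>\<bar>" 2] by simp
    then have "(\<Prod>i\<in>I. ?h (X i \<omega>)) = 0" using \<open>j \<in> I\<close> I(1) by (intro prod_zero) auto
    then show ?thesis by simp
  qed
  note prod = indep_vars_expectation_prod_comp[OF I(1) indep, of ?h 1]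
  have "exp (- 2 * L) * (3 / 4) ^ card I = exp (- 2 * L) * (\<Prod>i\<in>I. 3 / 4)" by simp
  also have "\<dots> \<le> exp (- 2 * L) * (\<Prod>i\<in>I. \<integral>\<omega>. ?h (X i \<omega>) \<partial>M)"
    using expectation_truncated_square_std_normal_ge[OF normal] by (intro mult_left_mono prod_mono) auto
  also have "\<dots> = (\<integral>\<omega>. exp (- 2 * L) * (\<Prod>i\<in>I. ?h (X i \<omega>)) \<partial>M)"
    using prod by auto
  also have "\<dots> \<le> (\<integral>\<omega>. exp (- L * (MAX i\<in>I. \<bar>X i \<omega>\<bar>)) \<partial>M)"
  proof (rule integral_mono[OF _ _ pointwise])
    show "integrable M (\<lambda>\<omega>. exp (- L * (MAX i\<in>I. \<bar>X i \<omega>\<bar>)))"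
      using I L by (intro integrable_exp_neg_Max_abs) auto
  qed (use prod in auto)
  finally show ?thesis .
qed

lemma minus_ln_expectation_exp_neg_Max_abs_bounds:
  fixes X :: "'i \<Rightarrow> 'a \<Rightarrow> real"
  assumes I: "finite I" "I \<noteq> {}" and indep: "indep_vars (\<lambda>_. borel) X I"
    and normal: "\<And>i. i \<in> I \<Longrightarrow> distributed M lborel (X i) std_normal_density"
    and card: "L / 2 \<le> real (card I)" "real (card I) \<le> 2 * L"
  defines "E \<equiv> \<integral>\<omega>. exp (- L * (MAX i\<in>I. \<bar>X i \<omega>\<bar>)) \<partial>M"
  shows "ln (32 / 31) / 2 * L \<le> - ln E" and "- ln E \<le> (2 + 2 * ln (4 / 3)) * L"
proof -
  have "card I > 0" using I by (simp add: card_gt_0_iff)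
  then have L: "L > 0" using card(2) by linarith
  have "exp (- ((2 + 2 * ln (4 / 3)) * L)) \<le> exp (- 2 * L) * exp (- real (card I) * ln (4 / 3))"
    using card(2) by (simp add: algebra_simps flip: exp_add)
  also have "\<dots> = exp (- 2 * L) * (3 / 4) ^ card I"
    by (simp add: powr_def ln_div algebra_simps flip: powr_realpow)
  also have "\<dots> \<le> E"
    unfolding E_def using L by (intro expectation_exp_neg_Max_abs_ge[OF I indep normal]) auto
  finally have lower: "exp (- ((2 + 2 * ln (4 / 3)) * L)) \<le> E" .
  have "E \<le> (31 / 32) ^ card I"
    unfolding E_def using card(2) L by (intro expectation_exp_neg_Max_abs_le[OF I indep normal]) auto
  also have "\<dots> = exp (- real (card I) * ln (32 / 31))"
    by (simp add: powr_def ln_div algebra_simps flip: powr_realpow)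
  also have "\<dots> \<le> exp (- (ln (32 / 31) / 2 * L))"
    using card(1) by (simp add: mult_right_mono)
  finally have upper: "E \<le> exp (- (ln (32 / 31) / 2 * L))" .
  have "E > 0" using lower by (rule less_le_trans[OF exp_gt_zero])
  then have "ln E \<le> - (ln (32 / 31) / 2 * L)" and "- ((2 + 2 * ln (4 / 3)) * L) \<le> ln E"
    using upper lower ln_ge_iff by (metis ln_exp ln_le_cancel_iff exp_gt_zero)+
  then show "ln (32 / 31) / 2 * L \<le> - ln E" and "- ln E \<le> (2 + 2 * ln (4 / 3)) * L"
    by linarith+
qed

end

theorem lemma9:
  fixes M :: "'a measure" and \<xi> :: "nat \<Rightarrow> 'a \<Rightarrow> real"
  assumes "prob_space M"
    and "prob_space.indep_vars M (\<lambda>_. borel) \<xi> {1..}"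
    and "\<And>i. i \<ge> 1 \<Longrightarrow> distributed M lborel (\<xi> i) std_normal_density"
  shows "\<exists>c3 c4. c3 > 0 \<and> c4 > 0 \<and>
    (\<forall>L::real. \<forall>N::nat. L > 0 \<and> L / 2 \<le> real N \<and> real N \<le> 2 * L \<longrightarrow>
      c3 * L \<le> - ln (\<integral>\<omega>. exp (- L * (MAX i\<in>{1..N}. \<bar>\<xi> i \<omega>\<bar>)) \<partial>M) \<and>
      - ln (\<integral>\<omega>. exp (- L * (MAX i\<in>{1..N}. \<bar>\<xi> i \<omega>\<bar>)) \<partial>M) \<le> c4 * L)"
proof (intro exI conjI allI impI)
  interpret prob_space M by fact
  fix L :: real and N :: nat
  assume L: "L > 0 \<and> L / 2 \<le> real N \<and> real N \<le> 2 * L"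
  then have "N \<ge> 1" by linarith
  moreover have "indep_vars (\<lambda>_. borel) \<xi> {1..N}"
    by (rule indep_vars_subset[OF assms(2)]) auto
  ultimately show "ln (32 / 31) / 2 * L \<le> - ln (\<integral>\<omega>. exp (- L * (MAX i\<in>{1..N}. \<bar>\<xi> i \<omega>\<bar>)) \<partial>M)"
    and "- ln (\<integral>\<omega>. exp (- L * (MAX i\<in>{1..N}. \<bar>\<xi> i \<omega>\<bar>)) \<partial>M) \<le> (2 + 2 * ln (4 / 3)) * L"
    using minus_ln_expectation_exp_neg_Max_abs_bounds[of "{1..N}" \<xi> L] assms(3) L by auto
qed (simp_all add: add_pos_nonneg)

end
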